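(* Let $r\ge1$ and $n\ge1$ be integers and let $\mathcal P(n,r,1)$ be the set of lattice paths with steps $(1,1)$ (up) and $(1,-r)$ (down) from $(0,0)$ to $((r+1)n+1,1)$ (so with $rn+1$ up steps and $n$ down steps). (1) For each $k=1,2,\dots,rn+1$, the number of paths in $\mathcal P(n,r,1)$ that start with an up step and have exactly $k$ up steps starting on or below the $x$-axis is $\frac{1}{rn+1}\binom{(r+1)n}{n}$. (2) For each $k=1,2,\dots,n$, the number of paths in $\mathcal P(n,r,1)$ that start with a down step and have exactly $k$ down steps starting on or below the $x$-axis is $\frac1n\binom{(r+1)n}{n-1}$. (3) For each $k=1,2,\dots,(r+1)n+1$, the number of paths in $\mathcal P(n,r,1)$ with exactly $k$ vertices on or below the $x$-axis is $\frac{1}{(r+1)n+1}\binom{(r+1)n+1}{n}$.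
   Context: A step starts on or below the $x$-axis if its initial vertex has $y$-coordinate $\le0$; a vertex is on or below the $x$-axis if its $y$-coordinate is $\le0$ (the final vertex, at height $1$, is never counted). *)

theory Defs
  imports Complex_Main
begin

text \<open>A lattice path is a list of steps; True = up step (1,1), False = down step (1,-r).\<close>

definition step_val :: "nat \<Rightarrow> bool \<Rightarrow> int" where
  "step_val r b = (if b then 1 else - int r)"

text \<open>y-coordinate of the i-th vertex (vertex 0 = origin), i.e. the initial vertex of step i.\<close>
definition height :: "nat \<Rightarrow> bool list \<Rightarrow> nat \<Rightarrow> int" where
  "height r p i = sum_list (map (step_val r) (take i p))"

definition paths :: "nat \<Rightarrow> nat \<Rightarrow> bool list set" where
  "paths n r = {p. length p = (r+1)*n+1 \<and> height r p (length p) = 1}"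

definition ups_below :: "nat \<Rightarrow> bool list \<Rightarrow> nat" where
  "ups_below r p = card {i. i < length p \<and> p ! i \<and> height r p i \<le> 0}"

definition downs_below :: "nat \<Rightarrow> bool list \<Rightarrow> nat" where
  "downs_below r p = card {i. i < length p \<and> \<not> p ! i \<and> height r p i \<le> 0}"

text \<open>Vertices 0..length-1 (final vertex excluded) on or below the x-axis.\<close>
definition verts_below :: "nat \<Rightarrow> bool list \<Rightarrow> nat" where
  "verts_below r p = card {i. i < length p \<and> height r p i \<le> 0}"

end

theory Submission
  imports Defs "HOL-Library.Product_Lexorder"
begin

text \<open>
  Cycle lemma. All \<open>L = (r+1)n+1\<close> rotations of a path in \<open>P(n,r,1)\<close> lie again in \<open>P(n,r,1)\<close>.
  Fix a set of marked positions (up steps, down steps, or all vertices) and order them by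
  height, breaking ties by decreasing index. Because the path ends at height 1, the rotation
  starting at a marked position \<open>j\<close> has exactly as many marked positions on or below the axis
  as \<open>j\<close> has rank in this order. Hence every path has, for each admissible \<open>k\<close>, exactly one
  rotation starting at a marked position with count \<open>k\<close>, and double counting pairs
  (path, rotation) shows that \<open>L\<close> times the desired number equals \<open>|P(n,r,1)| = binomial L n\<close>.
\<close>

definition count_below :: "nat \<Rightarrow> (bool \<Rightarrow> bool) \<Rightarrow> bool list \<Rightarrow> nat" where
  "count_below r S p = card {i. i < length p \<and> S (p ! i) \<and> height r p i \<le> 0}"

lemma height_0 [simp]: "height r p 0 = 0"
  by (simp add: height_def)

lemma height_append: "height r (xs @ ys) i = height r xs i + height r ys (i - length xs)"
  by (simp add: height_def take_append)

lemma height_take: "i \<le> j \<Longrightarrow> height r (take j p) i = height r p i"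
  by (simp add: height_def min_def)

lemma height_beyond_length: "length p \<le> i \<Longrightarrow> height r p i = height r p (length p)"
  by (simp add: height_def)

lemma height_drop: "height r (drop j p) i = height r p (j + i) - height r p j"
proof (cases "j \<le> length p")
  case True
  have "height r p (j + i) = height r (take j p) (j + i) + height r (drop j p) i"
    using height_append[of r "take j p" "drop j p" "j + i"] True by simp
  also have "height r (take j p) (j + i) = height r p j"
    using True by (simp add: height_def min_def)
  finally show ?thesis by simp
next
  case False
  then show ?thesis by (simp add: height_def)
qed

lemma height_rotate:
  assumes "length p = L" "j < L" "i < L"
  shows "height r (rotate j p) i =
    (if j + i < L then height r p (j + i) - height r p j
     else height r p (j + i - L) + height r p L - height r p j)"
proof -
  have "rotate j p = drop j p @ take j p"
    using assms by (simp add: rotate_drop_take)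
  then have rot: "height r (rotate j p) i = height r (drop j p) i + height r (take j p) (i - (L - j))"
    using assms by (simp add: height_append)
  show ?thesis
  proof (cases "j + i < L")
    case True
    then show ?thesis by (simp add: rot height_drop)
  next
    case False
    then have "height r p (j + i) = height r p L"
      using assms height_beyond_length[of p "j + i" r] by simp
    moreover have "i - (L - j) = j + i - L" "j + i - L \<le> j" using False assms by auto
    ultimately show ?thesis using False by (simp add: rot height_drop height_take)
  qed
qed

lemma card_shifted_indices:
  assumes "j < (L::nat)"
  shows "card {i. i < L \<and> Q ((j + i) mod L)} = card {m. m < L \<and> Q m}"
proof (rule bij_betw_same_card)
  have left_inverse: "((j + i) mod L + (L - j)) mod L = i" if "i < L" for i
  proof -
    have "((j + i) mod L + (L - j)) mod L = (j + i + (L - j)) mod L"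
      by (rule mod_add_left_eq)
    also have "j + i + (L - j) = i + L" using assms by simp
    finally show ?thesis using that by simp
  qed
  have right_inverse: "(j + (m + (L - j)) mod L) mod L = m" if "m < L" for m
  proof -
    have "(j + (m + (L - j)) mod L) mod L = (j + (m + (L - j))) mod L"
      by (rule mod_add_right_eq)
    also have "j + (m + (L - j)) = m + L" using assms by simp
    finally show ?thesis using that by simp
  qed
  show "bij_betw (\<lambda>i. (j + i) mod L) {i. i < L \<and> Q ((j + i) mod L)} {m. m < L \<and> Q m}"
    by (rule bij_betw_byWitness[where f' = "\<lambda>m. (m + (L - j)) mod L"])
      (use left_inverse right_inverse in auto)
qed

text \<open>Since the path ends at height 1, a vertex \<open>m < j\<close> lies weakly below the axis after
  rotation to \<open>j\<close> iff it lies strictly below vertex \<open>j\<close>; hence the lexicographic tie-break.\<close>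
lemma count_below_rotate:
  assumes "length p = L" "height r p L = 1" "j < L"
  shows "count_below r S (rotate j p) =
    card {m. m < L \<and> S (p ! m) \<and> (height r p m, - int m) \<le> (height r p j, - int j)}"
proof -
  define Q where "Q m \<longleftrightarrow> S (p ! m) \<and> (height r p m, - int m) \<le> (height r p j, - int j)" for m
  have "S (rotate j p ! i) \<and> height r (rotate j p) i \<le> 0 \<longleftrightarrow> Q ((j + i) mod L)"
    if "i < L" for i
  proof (cases "j + i < L")
    case True
    then show ?thesis
      using assms that by (auto simp: Q_def nth_rotate height_rotate)
  next
    case False
    then have "(j + i) mod L = j + i - L" "j + i - L < j"
      using assms that by (auto simp: le_mod_geq)
    then show ?thesis
      using False assms that by (auto simp: Q_def nth_rotate height_rotate)
  qed
  then have "count_below r S (rotate j p) = card {i. i < L \<and> Q ((j + i) mod L)}"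
    unfolding count_below_def using assms(1) by (intro arg_cong[where f = card]) auto
  also have "\<dots> = card {m. m < L \<and> Q m}"
    using assms(3) by (rule card_shifted_indices)
  finally show ?thesis by (simp add: Q_def)
qed

lemma ex1_rank:
  fixes f :: "'a \<Rightarrow> 'b::linorder"
  assumes fin: "finite T" and inj: "inj_on f T" and k: "1 \<le> k" "k \<le> card T"
  shows "\<exists>!j. j \<in> T \<and> card {m\<in>T. f m \<le> f j} = k"
proof -
  define rank where "rank j = card {m\<in>T. f m \<le> f j}" for j
  have rank_less: "rank i < rank j" if "i \<in> T" "j \<in> T" "f i < f j" for i j
  proof -
    have "{m\<in>T. f m \<le> f i} \<subset> {m\<in>T. f m \<le> f j}"
      using that by (auto dest: leD)
    then show ?thesis unfolding rank_def using fin by (intro psubset_card_mono) auto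
  qed
  have "inj_on rank T"
  proof (rule inj_onI)
    fix i j assume "i \<in> T" "j \<in> T" "rank i = rank j"
    then show "i = j"
      using rank_less inj_onD[OF inj] by (metis less_irrefl linorder_neqE)
  qed
  moreover have "rank ` T \<subseteq> {1..card T}"
  proof
    fix x assume "x \<in> rank ` T"
    then obtain j where j: "j \<in> T" "x = rank j" by auto
    then have "{m\<in>T. f m \<le> f j} \<noteq> {}" by auto
    then show "x \<in> {1..card T}"
      unfolding j rank_def using fin by (auto simp: Suc_le_eq card_gt_0_iff intro: card_mono)
  qed
  ultimately have "rank ` T = {1..card T}"
    by (intro card_subset_eq) (auto simp: card_image)
  then have "k \<in> rank ` T" using k by simp
  then show ?thesis
    using \<open>inj_on rank T\<close> unfolding rank_def[symmetric] by (auto dest: inj_onD)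
qed

lemma card_rotations_count_below:
  assumes len: "length p = L" and end_height: "height r p L = 1"
    and k: "1 \<le> k" "k \<le> card {m. m < L \<and> S (p ! m)}"
  shows "card {j. j < L \<and> S (rotate j p ! 0) \<and> count_below r S (rotate j p) = k} = 1"
proof -
  define T where "T = {m. m < L \<and> S (p ! m)}"
  define key where "key m = (height r p m, - int m)" for m
  have "L \<noteq> 0"
    using end_height by (rule contrapos_pn) simp
  then have "{j. j < L \<and> S (rotate j p ! 0) \<and> count_below r S (rotate j p) = k}
      = {j. j \<in> T \<and> card {m\<in>T. key m \<le> key j} = k}"
    using len end_height
    by (auto simp: T_def key_def count_below_rotate nth_rotate conj_assoc)
  moreover have "\<exists>!j. j \<in> T \<and> card {m\<in>T. key m \<le> key j} = k"
    using k unfolding T_def by (intro ex1_rank) (auto simp: inj_on_def key_def)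
  then obtain j where "{j. j \<in> T \<and> card {m\<in>T. key m \<le> key j} = k} = {j}"
    by blast
  ultimately show ?thesis by simp
qed

lemma rotate_rotate_inverse:
  assumes "length p = L"
  shows "rotate (L - j mod L) (rotate j p) = p" "rotate j (rotate (L - j mod L) p) = p"
proof (atomize (full), cases "L = 0")
  case False
  have "(j + (L - j mod L)) mod L = (j mod L + (L - j mod L)) mod L"
    by (rule mod_add_left_eq[symmetric])
  also have "\<dots> = 0" using False by simp
  finally show "rotate (L - j mod L) (rotate j p) = p \<and> rotate j (rotate (L - j mod L) p) = p"
    using assms by (simp add: rotate_rotate add.commute)
qed (use assms in simp)

lemma card_filter_rotate:
  assumes len: "\<And>p. p \<in> P \<Longrightarrow> length p = L" and closed: "\<And>p j. p \<in> P \<Longrightarrow> rotate j p \<in> P"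
  shows "card {p\<in>P. R (rotate j p)} = card {q\<in>P. R q}"
proof (rule bij_betw_same_card)
  have inverse: "rotate (L - j mod L) (rotate j p) = p" "rotate j (rotate (L - j mod L) p) = p"
    if "p \<in> P" for p
    using rotate_rotate_inverse len that by blast+
  show "bij_betw (rotate j) {p\<in>P. R (rotate j p)} {q\<in>P. R q}"
    by (rule bij_betw_byWitness[where f' = "rotate (L - j mod L)"])
      (use closed inverse in \<open>auto simp: image_subset_iff\<close>)
qed

text \<open>Double counting the pairs \<open>(p, j)\<close> with \<open>R (rotate j p)\<close>, first by \<open>p\<close>, then by \<open>j\<close>.\<close>
lemma card_unique_rotation:
  assumes fin: "finite P" and len: "\<And>p. p \<in> P \<Longrightarrow> length p = L"
    and closed: "\<And>p j. p \<in> P \<Longrightarrow> rotate j p \<in> P"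
    and unique: "\<And>p. p \<in> P \<Longrightarrow> card {j. j < L \<and> R (rotate j p)} = 1"
  shows "L * card {q\<in>P. R q} = card P"
proof -
  have "card P = (\<Sum>p\<in>P. \<Sum>j<L. of_bool (R (rotate j p)))"
    using unique by (simp add: Int_def)
  also have "\<dots> = (\<Sum>j<L. \<Sum>p\<in>P. of_bool (R (rotate j p)))"
    by (rule sum.swap)
  also have "\<dots> = (\<Sum>j<L. card {p\<in>P. R (rotate j p)})"
    using fin by (simp add: Int_def)
  also have "\<dots> = L * card {q\<in>P. R q}"
    using card_filter_rotate[OF len closed] by simp
  finally show ?thesis ..
qed

lemma card_ups_plus_downs:
  "card {i. i < length p \<and> p ! i} + card {i. i < length p \<and> \<not> p ! i} = length p"
proof -
  have "{i. i < length p \<and> p ! i} \<union> {i. i < length p \<and> \<not> p ! i} = {..<length p}" by auto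
  moreover have "card ({i. i < length p \<and> p ! i} \<union> {i. i < length p \<and> \<not> p ! i})
      = card {i. i < length p \<and> p ! i} + card {i. i < length p \<and> \<not> p ! i}"
    by (rule card_Un_disjoint) auto
  ultimately show ?thesis by simp
qed

lemma height_length:
  "height r p (length p) =
    int (card {i. i < length p \<and> p ! i}) - int r * int (card {i. i < length p \<and> \<not> p ! i})"
proof -
  have "height r p (length p) = (\<Sum>i<length p. step_val r (p ! i))"
    by (simp add: height_def sum_list_sum_nth atLeast0LessThan)
  also have "\<dots> = (\<Sum>i\<in>{i. i < length p \<and> p ! i}. 1) + (\<Sum>i\<in>{i. i < length p \<and> \<not> p ! i}. - int r)"
    unfolding step_val_def sum.If_cases[OF finite_lessThan]
    by (intro arg_cong2[where f = "(+)"] sum.cong) auto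
  finally show ?thesis by simp
qed

lemma mem_paths_iff:
  "p \<in> paths n r \<longleftrightarrow> length p = (r+1)*n+1 \<and> card {i. i < length p \<and> \<not> p ! i} = n"
proof -
  define d where "d = card {i. i < length p \<and> \<not> p ! i}"
  have "height r p (length p) = int (length p) - int (r+1) * int d"
    using height_length[of r p] card_ups_plus_downs[of p] unfolding d_def by (simp add: algebra_simps)
  then have "height r p (length p) = 1 + int (r+1) * (int n - int d)" if "length p = (r+1)*n+1"
    using that by (simp add: algebra_simps)
  then have "length p = (r+1)*n+1 \<Longrightarrow> height r p (length p) = 1 \<longleftrightarrow> d = n"
    by auto
  then show ?thesis unfolding paths_def d_def by auto
qed

lemma card_paths: "card (paths n r) = ((r+1)*n+1) choose n"
proof -
  define L where "L = (r+1)*n+1"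
  have "bij_betw (\<lambda>p. {i. i < L \<and> \<not> p ! i}) (paths n r) {B. B \<subseteq> {..<L} \<and> card B = n}"
  proof (rule bij_betw_byWitness[where f' = "\<lambda>B. map (\<lambda>i. i \<notin> B) [0..<L]"])
    show "\<forall>p\<in>paths n r. map (\<lambda>i. i \<notin> {i. i < L \<and> \<not> p ! i}) [0..<L] = p"
    proof
      fix p assume "p \<in> paths n r"
      then have "length p = L" by (simp add: mem_paths_iff L_def)
      then show "map (\<lambda>i. i \<notin> {i. i < L \<and> \<not> p ! i}) [0..<L] = p"
        by (auto intro: nth_equalityI)
    qed
    show "(\<lambda>B. map (\<lambda>i. i \<notin> B) [0..<L]) ` {B. B \<subseteq> {..<L} \<and> card B = n} \<subseteq> paths n r"
    proof
      fix q assume "q \<in> (\<lambda>B. map (\<lambda>i. i \<notin> B) [0..<L]) ` {B. B \<subseteq> {..<L} \<and> card B = n}"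
      then obtain B where B: "B \<subseteq> {..<L}" "card B = n" "q = map (\<lambda>i. i \<notin> B) [0..<L]" by auto
      then have "{i. i < length q \<and> \<not> q ! i} = B" by auto
      then show "q \<in> paths n r" unfolding mem_paths_iff using B L_def by simp
    qed
    show "\<forall>B\<in>{B. B \<subseteq> {..<L} \<and> card B = n}. {i. i < L \<and> \<not> map (\<lambda>i. i \<notin> B) [0..<L] ! i} = B"
      by auto
    show "(\<lambda>p. {i. i < L \<and> \<not> p ! i}) ` paths n r \<subseteq> {B. B \<subseteq> {..<L} \<and> card B = n}"
      by (auto simp: mem_paths_iff L_def)
  qed
  then have "card (paths n r) = card {B. B \<subseteq> {..<L} \<and> card B = n}"
    by (rule bij_betw_same_card)
  then show ?thesis using n_subsets[of "{..<L}" n] unfolding L_def by simp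
qed

lemma rotate_mem_paths:
  assumes "p \<in> paths n r"
  shows "rotate j p \<in> paths n r"
proof -
  define k where "k = j mod length p"
  have "sum_list (map (step_val r) (rotate j p))
      = sum_list (map (step_val r) (drop k p)) + sum_list (map (step_val r) (take k p))"
    by (simp add: rotate_drop_take k_def)
  also have "\<dots> = sum_list (map (step_val r) (take k p @ drop k p))"
    unfolding map_append sum_list_append by (rule add.commute)
  finally show ?thesis using assms unfolding paths_def height_def by simp
qed

lemma finite_paths: "finite (paths n r)"
  by (rule finite_subset[OF _ finite_lists_length_eq[of UNIV "(r+1)*n+1"]])
    (auto simp: paths_def)

lemma card_paths_count_below:
  assumes marked: "\<And>p. p \<in> paths n r \<Longrightarrow> card {m. m < length p \<and> S (p ! m)} = N"
    and k: "1 \<le> k" "k \<le> N"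
  shows "((r+1)*n+1) * card {q\<in>paths n r. S (q ! 0) \<and> count_below r S q = k}
    = ((r+1)*n+1) choose n"
  unfolding card_paths[symmetric]
proof (rule card_unique_rotation[OF finite_paths])
  fix p assume p: "p \<in> paths n r"
  then show len: "length p = (r+1)*n+1"
    by (simp add: mem_paths_iff)
  show "card {j. j < (r+1)*n+1 \<and> S (rotate j p ! 0) \<and> count_below r S (rotate j p) = k} = 1"
  proof (rule card_rotations_count_below[OF len _ k(1)])
    show "height r p ((r+1)*n+1) = 1"
      using p len by (simp add: paths_def)
    show "k \<le> card {m. m < (r+1)*n+1 \<and> S (p ! m)}"
      using marked[OF p] k(2) len by simp
  qed
qed (rule rotate_mem_paths)

lemma card_ups_paths:
  assumes "p \<in> paths n r"
  shows "card {i. i < length p \<and> p ! i} = r*n+1"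
proof -
  have "length p = (r+1)*n+1" "card {i. i < length p \<and> \<not> p ! i} = n"
    using assms unfolding mem_paths_iff by blast+
  moreover have "(r+1)*n = r*n + n" by simp
  ultimately show ?thesis using card_ups_plus_downs[of p] by linarith
qed

lemma paths_hd_conv_nth:
  assumes "p \<in> paths n r"
  shows "p \<noteq> [] \<and> hd p = p ! 0"
proof -
  have "length p = Suc ((r+1)*n)" using assms by (simp add: mem_paths_iff)
  then have "p \<noteq> []" by auto
  then show ?thesis by (simp add: hd_conv_nth)
qed

lemma real_eq_of_mult_eq: "(a::nat) * c = b \<Longrightarrow> a \<noteq> 0 \<Longrightarrow> real c = 1 / real a * real b"
  by (auto simp: field_simps simp flip: of_nat_mult)

lemma card_up_first_ups_below:
  assumes "1 \<le> k" "k \<le> r*n+1"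
  shows "real (card {p \<in> paths n r. p \<noteq> [] \<and> hd p \<and> ups_below r p = k})
    = 1 / real (r*n+1) * real (((r+1)*n) choose n)"
    (is "real (card ?C) = _")
proof -
  define L where "L = (r+1)*n+1"
  have marked: "?C = {q \<in> paths n r. id (q ! 0) \<and> count_below r id q = k}"
    using paths_hd_conv_nth by (auto simp: ups_below_def count_below_def)
  have count: "L * card ?C = L choose n"
    unfolding marked L_def using assms card_ups_paths
    by (intro card_paths_count_below[where N = "r*n+1"]) auto
  have "L - n = r*n+1" "(r+1)*n = L - 1" "L \<noteq> 0" by (simp_all add: L_def)
  then have "L * ((r*n+1) * card ?C) = (L - n) * (L * card ?C)"
    by (simp add: mult.left_commute)
  also have "\<dots> = L * (((r+1)*n) choose n)"
    unfolding count \<open>(r+1)*n = L - 1\<close> by (rule binomial_absorb_comp)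
  finally have "(r*n+1) * card ?C = ((r+1)*n) choose n"
    using \<open>L \<noteq> 0\<close> by simp
  then show ?thesis by (rule real_eq_of_mult_eq) simp
qed

lemma card_down_first_downs_below:
  assumes "1 \<le> k" "k \<le> n"
  shows "real (card {p \<in> paths n r. p \<noteq> [] \<and> \<not> hd p \<and> downs_below r p = k})
    = 1 / real n * real (((r+1)*n) choose (n-1))"
    (is "real (card ?C) = _")
proof -
  define L where "L = (r+1)*n+1"
  have marked: "?C = {q \<in> paths n r. Not (q ! 0) \<and> count_below r Not q = k}"
    using paths_hd_conv_nth by (auto simp: downs_below_def count_below_def)
  have count: "L * card ?C = L choose n"
    unfolding marked L_def using assms
    by (intro card_paths_count_below[where N = n]) (auto simp: mem_paths_iff)
  have "Suc (n-1) = n" "(r+1)*n = L - 1" "L \<noteq> 0" using assms by (simp_all add: L_def)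
  then have "L * (n * card ?C) = Suc (n-1) * (L choose Suc (n-1))"
    by (simp add: mult.left_commute count)
  also have "\<dots> = L * (((r+1)*n) choose (n-1))"
    unfolding \<open>(r+1)*n = L - 1\<close> by (rule binomial_absorption)
  finally have "n * card ?C = ((r+1)*n) choose (n-1)"
    using \<open>L \<noteq> 0\<close> by simp
  then show ?thesis by (rule real_eq_of_mult_eq) (use assms in simp)
qed

lemma card_verts_below:
  assumes "1 \<le> k" "k \<le> (r+1)*n+1"
  shows "real (card {p \<in> paths n r. verts_below r p = k})
    = 1 / real ((r+1)*n+1) * real (((r+1)*n+1) choose n)"
    (is "real (card ?C) = _")
proof (rule real_eq_of_mult_eq)
  have marked: "?C = {q \<in> paths n r. (\<lambda>_. True) (q ! 0) \<and> count_below r (\<lambda>_. True) q = k}"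
    by (auto simp: verts_below_def count_below_def)
  show "((r+1)*n+1) * card ?C = ((r+1)*n+1) choose n"
    unfolding marked using assms
    by (intro card_paths_count_below[where N = "(r+1)*n+1"]) (auto simp: mem_paths_iff)
qed simp

theorem theorem13:
  fixes n r :: nat
  assumes "r \<ge> 1" and "n \<ge> 1"
  shows "(\<forall>k. 1 \<le> k \<and> k \<le> r*n+1 \<longrightarrow>
            real (card {p \<in> paths n r. p \<noteq> [] \<and> hd p \<and> ups_below r p = k})
              = 1 / real (r*n+1) * real (((r+1)*n) choose n))
       \<and> (\<forall>k. 1 \<le> k \<and> k \<le> n \<longrightarrow>
            real (card {p \<in> paths n r. p \<noteq> [] \<and> \<not> hd p \<and> downs_below r p = k})
              = 1 / real n * real (((r+1)*n) choose (n-1)))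
       \<and> (\<forall>k. 1 \<le> k \<and> k \<le> (r+1)*n+1 \<longrightarrow>
            real (card {p \<in> paths n r. verts_below r p = k})
              = 1 / real ((r+1)*n+1) * real (((r+1)*n+1) choose n))"
  using card_up_first_ups_below card_down_first_downs_below card_verts_below by blast

end
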